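(* There exist constants $\overline C>0$ and $0<\overline\theta<1$ such that for all $n\geq1$, all $j\in\{1,\dots,2p\}$, all $z\in\mathcal D_j$ and all $\alpha\neq\beta\in\mathscr W_n^j$, $$|\gamma_\alpha(z)-\gamma_\beta(z)|\geq\overline C\,\overline\theta^{\,r(\alpha,\beta)},$$ where $r(\alpha,\beta)=\max\{0\leq i\leq n:\ \alpha_k=\beta_k\text{ for all }k\leq i\}$.
   Context: Schottky setup: $\Gamma\subset PSL_2(\mathbb Z)$ is a non-elementary convex co-compact subgroup realized as a Schottky group: there are open Euclidean discs $\mathcal D_1,\dots,\mathcal D_{2p}\subset\mathbb C$ with centers on $\mathbb R$ and pairwise disjoint closures, and matrices $\gamma_1,\dots,\gamma_p\in SL_2(\mathbb Z)$ acting as Möbius maps with $\gamma_i(\mathcal D_i)=\widehat{\mathbb C}\setminus\overline{\mathcal D_{p+i}}$; $\Gamma$ is the free group they generate. Put $\gamma_{p+i}=\gamma_i^{-1}$ (indices mod $2p$); then $\gamma_i(\mathcal D_j)\subset\mathcal D_{p+i}$ for $j\neq i$. Let $\mathscr W_n$ be the set of $\alpha=(\alpha_1,\dots,\alpha_n)\in\{1,\dots,2p\}^n$ with $\alpha_{i+1}\neq\alpha_i+p\pmod{2p}$ for all $i$, $\mathscr W_n^j=\{\alpha\in\mathscr W_n:\alpha_n\neq j\}$, and $\gamma_\alpha=\gamma_{\alpha_1}\circ\cdots\circ\gamma_{\alpha_n}$; for $\alpha\in\mathscr W_n^j$, $\gamma_\alpha(\overline{\mathcal D_j})\subset\mathcal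 D_{p+\alpha_1}$. *)

theory Defs
  imports "HOL-Analysis.Analysis"
begin

text \<open>Integer 2x2 matrices (a,b,c,d) = [[a,b],[c,d]].\<close>
type_synonym imat = "int \<times> int \<times> int \<times> int"

definition in_SL2Z :: "imat \<Rightarrow> bool" where
  "in_SL2Z M = (case M of (a,b,c,d) \<Rightarrow> a*d - b*c = 1)"

definition mat_inv :: "imat \<Rightarrow> imat" where
  "mat_inv M = (case M of (a,b,c,d) \<Rightarrow> (d, -b, -c, a))"

text \<open>Moebius action on the Riemann sphere, modelled as complex option (None = infinity).\<close>
definition moeb :: "imat \<Rightarrow> complex option \<Rightarrow> complex option" where
  "moeb M w = (case M of (a,b,c,d) \<Rightarrow>
     (case w of
        None \<Rightarrow> (if c = 0 then None else Some (of_int a / of_int c))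
      | Some z \<Rightarrow> (if of_int c * z + of_int d = 0 then None
                   else Some ((of_int a * z + of_int b) / (of_int c * z + of_int d)))))"

text \<open>Index i+p mod 2p, with representatives in {1..2p}.\<close>
definition opp :: "nat \<Rightarrow> nat \<Rightarrow> nat" where
  "opp p i = (if i \<le> p then i + p else i - p)"

definition gam :: "nat \<Rightarrow> (nat \<Rightarrow> imat) \<Rightarrow> nat \<Rightarrow> imat" where
  "gam p g i = (if i \<le> p then g i else mat_inv (g (i - p)))"

definition disc :: "(nat \<Rightarrow> real) \<Rightarrow> (nat \<Rightarrow> real) \<Rightarrow> nat \<Rightarrow> complex set" where
  "disc cen rad i = ball (complex_of_real (cen i)) (rad i)"

definition schottky_setup ::
  "nat \<Rightarrow> (nat \<Rightarrow> imat) \<Rightarrow> (nat \<Rightarrow> real) \<Rightarrow> (nat \<Rightarrow> real) \<Rightarrow> bool" where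
  "schottky_setup p g cen rad \<longleftrightarrow>
     p \<ge> 2 \<and>
     (\<forall>i\<in>{1..2*p}. rad i > 0) \<and>
     (\<forall>i\<in>{1..2*p}. \<forall>k\<in>{1..2*p}. i \<noteq> k \<longrightarrow>
         closure (disc cen rad i) \<inter> closure (disc cen rad k) = {}) \<and>
     (\<forall>i\<in>{1..p}. in_SL2Z (g i)) \<and>
     (\<forall>i\<in>{1..p}. moeb (g i) ` (Some ` disc cen rad i)
                   = UNIV - Some ` closure (disc cen rad (p + i)))"

definition words :: "nat \<Rightarrow> nat \<Rightarrow> nat list set" where
  "words p n = {al. length al = n \<and> (\<forall>i<n. al ! i \<in> {1..2*p}) \<and>
                    (\<forall>i. Suc i < n \<longrightarrow> al ! Suc i \<noteq> opp p (al ! i))}"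

definition words_j :: "nat \<Rightarrow> nat \<Rightarrow> nat \<Rightarrow> nat list set" where
  "words_j p n j = {al \<in> words p n. al ! (n - 1) \<noteq> j}"

definition word_act :: "nat \<Rightarrow> (nat \<Rightarrow> imat) \<Rightarrow> nat list \<Rightarrow> complex option \<Rightarrow> complex option" where
  "word_act p g al = foldr (\<lambda>i f. moeb (gam p g i) \<circ> f) al id"

text \<open>r(alpha,beta) = max{0 \<le> i \<le> n : alpha_k = beta_k for all k \<le> i} (1-indexed).\<close>
definition rr :: "nat list \<Rightarrow> nat list \<Rightarrow> nat" where
  "rr al be = Max {i. i \<le> length al \<and> (\<forall>k<i. al ! k = be ! k)}"

end

theory Submission
  imports Defs
begin

(*
  Let r = r(alpha,beta) be the length of the common prefix w of alpha and beta.
  The tails of alpha and beta map z (ping-pong) into the closed discs D_{p+alpha_{r+1}}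
  and D_{p+beta_{r+1}}, which are distinct, so the two image points are at distance at
  least delta, the minimal gap between two closed Schottky discs.  Applying the common
  prefix w contracts distances by at most a factor B per letter, because for a Moebius map
  of determinant 1 one has |u - v| = |u' - v'| |cu + d| |cv + d| and |cu + d| is bounded
  on the (bounded) union of the discs.  Hence the distance is at least delta * (1/B)^r.
*)

section \<open>Moebius transformations of determinant one\<close>

lemma moeb_inv:
  assumes "in_SL2Z M" shows "moeb (mat_inv M) (moeb M w) = w"
proof -
  obtain a b c d where M: "M = (a,b,c,d)" by (cases M) auto
  have det: "a*d - b*c = 1" using assms M by (simp add: in_SL2Z_def)
  hence detc: "of_int a * of_int d - of_int b * of_int c = (1::complex)"
    by (metis of_int_1 of_int_diff of_int_mult)
  show ?thesis
  proof (cases w)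
    case None
    show ?thesis
    proof (cases "c = 0")
      case True thus ?thesis using None M by (simp add: moeb_def mat_inv_def)
    next
      case False
      hence "- (of_int c * (of_int a / of_int c)) + of_int a = (0::complex)" by simp
      thus ?thesis using None M False by (simp add: moeb_def mat_inv_def)
    qed
  next
    case (Some z)
    show ?thesis
    proof (cases "of_int c * z + of_int d = 0")
      case True
      have c0: "c \<noteq> 0" using True det by (cases "c = 0") auto
      hence "z = - of_int d / of_int c" using True by (simp add: field_simps add_eq_0_iff)
      then show ?thesis using Some M True c0 by (simp add: moeb_def mat_inv_def)
    next
      case False
      let ?q = "of_int c * z + of_int d"
      let ?w = "(of_int a * z + of_int b) / ?q"
      have den: "of_int (-c) * ?w + of_int a = 1 / ?q"
        using False detc by (simp add: field_simps; simp add: algebra_simps)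
      have num: "of_int d * ?w + of_int (-b) = z / ?q"
        using False detc by (simp add: field_simps; simp add: algebra_simps)
      have m1: "moeb M w = Some ?w" using Some M False by (simp add: moeb_def)
      have m2: "moeb (mat_inv M) (Some ?w) = (if of_int (-c) * ?w + of_int a = 0 then None
         else Some ((of_int d * ?w + of_int (-b)) / (of_int (-c) * ?w + of_int a)))"
        unfolding moeb_def mat_inv_def M by (simp only: prod.case option.case)
      show ?thesis unfolding m1 m2 den num using False Some by simp
    qed
  qed
qed

lemma moeb_inj:
  assumes "in_SL2Z M" "moeb M w = moeb M w'" shows "w = w'"
  by (metis assms moeb_inv)

lemma SL2Z_mat_inv: "in_SL2Z M \<Longrightarrow> in_SL2Z (mat_inv M)"
  by (cases M) (simp add: in_SL2Z_def mat_inv_def algebra_simps)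

lemma moeb_dist:
  assumes "in_SL2Z (a,b,c,d)" "moeb (a,b,c,d) (Some u) = Some u'" "moeb (a,b,c,d) (Some v) = Some v'"
  shows "cmod (u - v) = cmod (u' - v') * cmod (of_int c * u + of_int d) * cmod (of_int c * v + of_int d)"
proof -
  have "a*d - b*c = 1" using assms by (simp add: in_SL2Z_def)
  hence detc: "of_int a * of_int d - of_int b * of_int c = (1::complex)"
    by (metis of_int_1 of_int_diff of_int_mult)
  have nu: "of_int c * u + of_int d \<noteq> 0" using assms(2) by (auto simp: moeb_def split: if_splits)
  have nv: "of_int c * v + of_int d \<noteq> 0" using assms(3) by (auto simp: moeb_def split: if_splits)
  have u': "u' = (of_int a * u + of_int b) / (of_int c * u + of_int d)"
    using assms(2) nu by (simp add: moeb_def)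
  have v': "v' = (of_int a * v + of_int b) / (of_int c * v + of_int d)"
    using assms(3) nv by (simp add: moeb_def)
  have "u' - v' = (u - v) / ((of_int c * u + of_int d) * (of_int c * v + of_int d))"
    unfolding u' v' using nu nv detc by (simp add: field_simps; simp add: algebra_simps)
  hence "u - v = (u' - v') * ((of_int c * u + of_int d) * (of_int c * v + of_int d))"
    using nu nv by (simp add: eq_divide_eq)
  thus ?thesis by (simp add: norm_mult)
qed

definition entry_sum :: "imat \<Rightarrow> real" where
  "entry_sum M = (case M of (a,b,c,d) \<Rightarrow> \<bar>a\<bar> + \<bar>b\<bar> + \<bar>c\<bar> + \<bar>d\<bar>)"

lemma entry_sum_mat_inv: "entry_sum (mat_inv M) = entry_sum M"
  by (cases M) (simp add: entry_sum_def mat_inv_def)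

lemma entry_sum_nonneg: "entry_sum M \<ge> 0"
  by (cases M) (simp add: entry_sum_def)

section \<open>Reduced words\<close>

lemma opp_range: "x \<in> {1..2*p} \<Longrightarrow> opp p x \<in> {1..2*p}" by (auto simp: opp_def)
lemma opp_opp: "x \<in> {1..2*p} \<Longrightarrow> opp p (opp p x) = x" by (auto simp: opp_def)

definition reduced :: "nat \<Rightarrow> nat list \<Rightarrow> bool" where
  "reduced p w \<longleftrightarrow> (\<forall>i<length w. w!i \<in> {1..2*p}) \<and>
                    (\<forall>i. Suc i < length w \<longrightarrow> w!Suc i \<noteq> opp p (w!i))"

lemma words_reduced: "al \<in> words p n \<longleftrightarrow> reduced p al \<and> length al = n"
  by (auto simp: words_def reduced_def)

lemma reduced_Cons:
  "reduced p (x#w) \<longleftrightarrow> x \<in> {1..2*p} \<and> reduced p w \<and> (w \<noteq> [] \<longrightarrow> hd w \<noteq> opp p x)"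
proof
  assume r: "reduced p (x#w)"
  have "x \<in> {1..2*p}" using r unfolding reduced_def by (metis length_Cons nth_Cons_0 zero_less_Suc)
  moreover have "reduced p w" using r unfolding reduced_def
    by (metis Suc_less_eq length_Cons nth_Cons_Suc)
  moreover have "w \<noteq> [] \<longrightarrow> hd w \<noteq> opp p x" using r unfolding reduced_def
    by (metis hd_conv_nth length_Cons length_greater_0_conv nth_Cons_0 nth_Cons_Suc Suc_less_eq)
  ultimately show "x \<in> {1..2*p} \<and> reduced p w \<and> (w \<noteq> [] \<longrightarrow> hd w \<noteq> opp p x)" by blast
next
  assume r: "x \<in> {1..2*p} \<and> reduced p w \<and> (w \<noteq> [] \<longrightarrow> hd w \<noteq> opp p x)"
  show "reduced p (x#w)" unfolding reduced_def
  proof (intro conjI allI impI)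
    fix i assume "i < length (x#w)" thus "(x#w)!i \<in> {1..2*p}" using r
      by (cases i) (auto simp: reduced_def)
  next
    fix i assume i: "Suc i < length (x#w)"
    show "(x#w)!Suc i \<noteq> opp p ((x#w)!i)"
      using r i by (cases i) (auto simp: reduced_def hd_conv_nth)
  qed
qed

lemma reduced_Nil [simp]: "reduced p []" by (simp add: reduced_def)

lemma reduced_appendD: "reduced p (xs @ ys) \<Longrightarrow> reduced p xs \<and> reduced p ys"
  by (induction xs) (auto simp: reduced_Cons)

text \<open>A word w may be applied to the closed disc D_a if its last letter is not a;
  the image then lies in the disc D_(exit_disc p w a).\<close>
definition admissible :: "nat \<Rightarrow> nat list \<Rightarrow> nat \<Rightarrow> bool" where
  "admissible p w a \<longleftrightarrow> reduced p w \<and> a \<in> {1..2*p} \<and> (w \<noteq> [] \<longrightarrow> last w \<noteq> a)"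

definition exit_disc :: "nat \<Rightarrow> nat list \<Rightarrow> nat \<Rightarrow> nat" where
  "exit_disc p w a = (if w = [] then a else opp p (hd w))"

lemma admissible_Cons:
  assumes "admissible p (x#w) a"
  shows "admissible p w a \<and> x \<in> {1..2*p} \<and> exit_disc p w a \<in> {1..2*p} \<and> exit_disc p w a \<noteq> x"
proof -
  have r: "x \<in> {1..2*p}" "reduced p w" "w \<noteq> [] \<Longrightarrow> hd w \<noteq> opp p x"
    using assms reduced_Cons by (auto simp: admissible_def)
  have hd: "w \<noteq> [] \<Longrightarrow> hd w \<in> {1..2*p}"
    using r(2) unfolding reduced_def by (metis hd_conv_nth length_greater_0_conv)
  have "w \<noteq> [] \<Longrightarrow> opp p (hd w) \<noteq> x" using r(1,3) hd opp_opp by metis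
  thus ?thesis using assms r hd opp_range by (auto simp: admissible_def exit_disc_def)
qed

lemma words_j_tail:
  assumes al: "al \<in> words_j p n j" and j: "j \<in> {1..2*p}" and r: "r < n"
  shows "admissible p (drop r al) j \<and> exit_disc p (drop r al) j = opp p (al ! r)"
proof -
  have a: "reduced p al" "length al = n" "al ! (n-1) \<noteq> j"
    using al by (auto simp: words_j_def words_reduced)
  have "reduced p (drop r al)" using reduced_appendD[of p "take r al" "drop r al"] a by simp
  moreover have "drop r al \<noteq> []" "last (drop r al) = al ! (n-1)" "hd (drop r al) = al ! r"
    using r a by (auto simp: last_conv_nth hd_drop_conv_nth)
  ultimately show ?thesis using a j by (auto simp: admissible_def exit_disc_def)
qed

lemma prefix_admissible:
  assumes a: "reduced p al" and r: "r < length al"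
  shows "admissible p (take r al) (opp p (al ! r))"
proof -
  have ar: "al ! r \<in> {1..2*p}" using a r by (simp add: reduced_def)
  have "last (take r al) \<noteq> opp p (al ! r)" if "take r al \<noteq> []"
  proof
    assume "last (take r al) = opp p (al ! r)"
    moreover have "last (take r al) = al ! (r - 1)" "r = Suc (r - 1)"
      using that r by (auto simp: last_conv_nth)
    ultimately have "al ! Suc (r - 1) = opp p (al ! (r - 1))" using opp_opp[OF ar] by simp
    thus False using a r \<open>r = Suc (r - 1)\<close> unfolding reduced_def by (metis)
  qed
  moreover have "reduced p (take r al)" using reduced_appendD[of p "take r al" "drop r al"] a by simp
  ultimately show ?thesis using opp_range[OF ar] by (simp add: admissible_def)
qed

lemma rr_first_difference:
  assumes "length al = n" "length be = n" "al \<noteq> be"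
  shows "rr al be < n \<and> take (rr al be) al = take (rr al be) be \<and> al ! rr al be \<noteq> be ! rr al be"
proof -
  let ?S = "{i. i \<le> length al \<and> (\<forall>k<i. al ! k = be ! k)}"
  have fin: "finite ?S" by (rule finite_subset[of _ "{..length al}"]) auto
  have r: "rr al be \<in> ?S" unfolding rr_def using fin by (intro Max_in) auto
  have rn: "rr al be < n"
  proof (rule ccontr)
    assume "\<not> rr al be < n"
    hence "\<forall>k<n. al ! k = be ! k" using r assms by auto
    thus False using assms by (metis nth_equalityI)
  qed
  have "al ! rr al be \<noteq> be ! rr al be"
  proof
    assume "al ! rr al be = be ! rr al be"
    hence "Suc (rr al be) \<in> ?S" using r rn assms by (auto simp: less_Suc_eq)
    hence "Suc (rr al be) \<le> rr al be" unfolding rr_def using fin by (intro Max_ge) auto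
    thus False by simp
  qed
  moreover have "take (rr al be) al = take (rr al be) be"
    using r rn assms by (intro nth_equalityI) auto
  ultimately show ?thesis using rn by blast
qed

lemma word_act_Nil [simp]: "word_act p g [] = id" by (simp add: word_act_def)
lemma word_act_Cons [simp]: "word_act p g (x#w) = moeb (gam p g x) \<circ> word_act p g w"
  by (simp add: word_act_def)
lemma word_act_append: "word_act p g (w @ v) = word_act p g w \<circ> word_act p g v"
  by (induction w) auto

lemma finite_index_pairs: "finite {(i,k). i \<in> {1..2*p} \<and> k \<in> {1..2*p} \<and> (i::nat) \<noteq> k}"
  by (rule finite_subset[of _ "{1..2*p} \<times> {1..2*p}"]) auto

section \<open>Ping-pong and distortion in a Schottky setup\<close>

context
  fixes p :: nat and g :: "nat \<Rightarrow> imat" and cen rad :: "nat \<Rightarrow> real"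
  assumes S: "schottky_setup p g cen rad"
begin

lemma rad_pos: "i \<in> {1..2*p} \<Longrightarrow> rad i > 0" using S by (simp add: schottky_setup_def)

lemma closure_disc: "i \<in> {1..2*p} \<Longrightarrow> closure (disc cen rad i) = cball (cen i) (rad i)"
  using rad_pos by (simp add: disc_def)

lemma discs_disjoint: "i \<in> {1..2*p} \<Longrightarrow> k \<in> {1..2*p} \<Longrightarrow> i \<noteq> k \<Longrightarrow>
   closure (disc cen rad i) \<inter> closure (disc cen rad k) = {}"
  using S by (simp add: schottky_setup_def)

lemma gam_SL2Z: "x \<in> {1..2*p} \<Longrightarrow> in_SL2Z (gam p g x)"
proof -
  assume x: "x \<in> {1..2*p}"
  have "\<forall>i\<in>{1..p}. in_SL2Z (g i)" using S by (simp add: schottky_setup_def)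
  moreover have "\<not> x \<le> p \<Longrightarrow> x - p \<in> {1..p}" using x by auto
  ultimately show ?thesis using x by (auto simp: gam_def intro!: SL2Z_mat_inv)
qed

lemma pingpong_step:
  assumes x: "x \<in> {1..2*p}" and k: "k \<in> {1..2*p}" "k \<noteq> x" and u: "u \<in> closure (disc cen rad k)"
  shows "\<exists>u'. moeb (gam p g x) (Some u) = Some u' \<and> u' \<in> closure (disc cen rad (opp p x))"
proof (cases "x \<le> p")
  case True
  have img: "moeb (g x) ` (Some ` disc cen rad x) = UNIV - Some ` closure (disc cen rad (p + x))"
    and SL: "in_SL2Z (g x)" using S x True by (auto simp: schottky_setup_def)
  have "u \<notin> disc cen rad x" using discs_disjoint[OF k(1) x k(2)] u closure_subset by blast
  hence "moeb (g x) (Some u) \<notin> moeb (g x) ` (Some ` disc cen rad x)"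
    using moeb_inj[OF SL] by blast
  hence "moeb (g x) (Some u) \<in> Some ` closure (disc cen rad (p + x))" using img by blast
  moreover have "gam p g x = g x" "opp p x = p + x" using True by (auto simp: gam_def opp_def)
  ultimately show ?thesis by auto
next
  case False
  define i where "i = x - p"
  have i: "i \<in> {1..p}" "x = p + i" using x False by (auto simp: i_def)
  have img: "moeb (g i) ` (Some ` disc cen rad i) = UNIV - Some ` closure (disc cen rad x)"
    and SL: "in_SL2Z (g i)" using S i by (auto simp: schottky_setup_def)
  have "u \<notin> closure (disc cen rad x)" using discs_disjoint[OF k(1) x k(2)] u by blast
  then obtain y where y: "y \<in> disc cen rad i" "Some u = moeb (g i) (Some y)" using img by auto
  have "moeb (gam p g x) (Some u) = Some y"
    using False moeb_inv[OF SL] by (simp add: gam_def i_def y(2))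
  moreover have "opp p x = i" using False by (simp add: opp_def i_def)
  ultimately show ?thesis using y(1) closure_subset by blast
qed

lemma word_maps_into_disc:
  assumes "admissible p w a" "u \<in> closure (disc cen rad a)"
  shows "\<exists>u'. word_act p g w (Some u) = Some u' \<and> u' \<in> closure (disc cen rad (exit_disc p w a))"
  using assms(1)
proof (induction w)
  case Nil thus ?case using assms(2) by (simp add: exit_disc_def)
next
  case (Cons x w)
  note adm = admissible_Cons[OF Cons.prems]
  obtain u1 where "word_act p g w (Some u) = Some u1" "u1 \<in> closure (disc cen rad (exit_disc p w a))"
    using Cons.IH adm by blast
  moreover obtain u2 where "moeb (gam p g x) (Some u1) = Some u2" "u2 \<in> closure (disc cen rad (opp p x))"
    using pingpong_step adm calculation(2) by blast
  ultimately show ?case by (auto simp: exit_disc_def)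
qed

text \<open>Constants: a bound for the moduli of points of the discs, a bound for the entries of the
  generators, the resulting distortion factor (kept > 1), and the minimal gap between two closed discs.\<close>
definition disc_bound :: real where
  "disc_bound = (\<Sum>k\<in>{1..2*p}. \<bar>cen k\<bar> + rad k)"

definition entry_bound :: real where
  "entry_bound = (\<Sum>i\<in>{1..p}. entry_sum (g i))"

definition distortion :: real where
  "distortion = (entry_bound * (disc_bound + 1))^2 + 2"

definition disc_gap :: real where
  "disc_gap = Min ((\<lambda>(i,k). setdist (closure (disc cen rad i)) (closure (disc cen rad k))) `
                   {(i,k). i \<in> {1..2*p} \<and> k \<in> {1..2*p} \<and> i \<noteq> k})"

lemma norm_le_disc_bound:
  assumes "k \<in> {1..2*p}" "u \<in> closure (disc cen rad k)" shows "cmod u \<le> disc_bound"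
proof -
  have nonneg: "\<And>k. k \<in> {1..2*p} \<Longrightarrow> 0 \<le> \<bar>cen k\<bar> + rad k"
    using rad_pos by (simp add: add_nonneg_pos less_imp_le)
  have "cmod u \<le> \<bar>cen k\<bar> + rad k"
    using assms closure_disc[OF assms(1)] norm_triangle_ineq2[of u "complex_of_real (cen k)"]
    by (auto simp: dist_norm norm_minus_commute)
  also have "\<dots> \<le> disc_bound" unfolding disc_bound_def
    using assms(1) nonneg by (intro member_le_sum) auto
  finally show ?thesis .
qed

lemma entry_sum_le_entry_bound: "x \<in> {1..2*p} \<Longrightarrow> entry_sum (gam p g x) \<le> entry_bound"
  unfolding entry_bound_def gam_def
  by (auto simp: entry_sum_mat_inv entry_sum_nonneg intro!: member_le_sum)

lemma distortion_gt_1: "distortion > 1"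
proof -
  have "0 \<le> (entry_bound * (disc_bound + 1))^2" by simp
  thus ?thesis unfolding distortion_def by linarith
qed

lemma denominator_bound:
  assumes "x \<in> {1..2*p}" "gam p g x = (a,b,c,d)" "k \<in> {1..2*p}" "u \<in> closure (disc cen rad k)"
  shows "cmod (of_int c * u + of_int d) \<le> entry_bound * (disc_bound + 1)"
proof -
  have e: "\<bar>real_of_int c\<bar> \<le> entry_bound" "\<bar>real_of_int d\<bar> \<le> entry_bound"
    using entry_sum_le_entry_bound[OF assms(1)] assms(2) by (auto simp: entry_sum_def)
  have "cmod (of_int c * u + of_int d) \<le> \<bar>real_of_int c\<bar> * cmod u + \<bar>real_of_int d\<bar>"
    using norm_triangle_ineq[of "of_int c * u" "of_int d"] by (simp add: norm_mult)
  also have "\<dots> \<le> entry_bound * disc_bound + entry_bound"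
    using e norm_le_disc_bound[OF assms(3,4)] by (intro add_mono mult_mono) auto
  finally show ?thesis by (simp add: algebra_simps)
qed

lemma one_step_distortion:
  assumes x: "x \<in> {1..2*p}" and k: "k \<in> {1..2*p}" "u \<in> closure (disc cen rad k)"
    and l: "l \<in> {1..2*p}" "v \<in> closure (disc cen rad l)"
    and mu: "moeb (gam p g x) (Some u) = Some u'" and mv: "moeb (gam p g x) (Some v) = Some v'"
  shows "cmod (u - v) \<le> distortion * cmod (u' - v')"
proof -
  obtain a b c d where M: "gam p g x = (a,b,c,d)" by (cases "gam p g x") auto
  let ?E = "entry_bound * (disc_bound + 1)"
  have eq: "cmod (u - v) = cmod (u' - v') * (cmod (of_int c * u + of_int d) * cmod (of_int c * v + of_int d))"
    using moeb_dist[of a b c d u u' v v'] gam_SL2Z[OF x] mu mv M by simp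
  have "cmod (of_int c * u + of_int d) * cmod (of_int c * v + of_int d) \<le> ?E * ?E"
    using denominator_bound[OF x M k] denominator_bound[OF x M l]
    by (intro mult_mono) (auto intro: order_trans[OF norm_ge_zero])
  also have "\<dots> \<le> distortion" unfolding distortion_def power2_eq_square by linarith
  finally show ?thesis unfolding eq by (simp add: mult_left_mono mult.commute)
qed

lemma word_distortion:
  assumes "admissible p w a" "admissible p w b"
    and u: "u \<in> closure (disc cen rad a)" and v: "v \<in> closure (disc cen rad b)"
  shows "cmod (u - v) \<le> distortion ^ length w *
           cmod (the (word_act p g w (Some u)) - the (word_act p g w (Some v)))"
  using assms(1,2)
proof (induction w)
  case Nil thus ?case by simp
next
  case (Cons x w)
  note adm_a = admissible_Cons[OF Cons.prems(1)] and adm_b = admissible_Cons[OF Cons.prems(2)]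
  obtain u1 where u1: "word_act p g w (Some u) = Some u1" "u1 \<in> closure (disc cen rad (exit_disc p w a))"
    using word_maps_into_disc adm_a u by blast
  obtain v1 where v1: "word_act p g w (Some v) = Some v1" "v1 \<in> closure (disc cen rad (exit_disc p w b))"
    using word_maps_into_disc adm_b v by blast
  obtain u2 where u2: "moeb (gam p g x) (Some u1) = Some u2"
    using pingpong_step adm_a u1(2) by blast
  obtain v2 where v2: "moeb (gam p g x) (Some v1) = Some v2"
    using pingpong_step adm_b v1(2) by blast
  have "cmod (u - v) \<le> distortion ^ length w * cmod (u1 - v1)"
    using Cons.IH adm_a adm_b u1(1) v1(1) by simp
  also have "\<dots> \<le> distortion ^ length w * (distortion * cmod (u2 - v2))"
    using one_step_distortion[OF _ _ u1(2) _ v1(2) u2 v2] adm_a adm_b distortion_gt_1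
    by (intro mult_left_mono) auto
  finally show ?case using u1(1) v1(1) u2 v2 by (simp add: algebra_simps)
qed

lemma disc_gap_le:
  assumes "i \<in> {1..2*p}" "k \<in> {1..2*p}" "i \<noteq> k"
    "u \<in> closure (disc cen rad i)" "v \<in> closure (disc cen rad k)"
  shows "disc_gap \<le> cmod (u - v)"
proof -
  have "disc_gap \<le> setdist (closure (disc cen rad i)) (closure (disc cen rad k))"
    unfolding disc_gap_def using assms(1-3) finite_index_pairs by (intro Min_le) auto
  also have "\<dots> \<le> dist u v" using assms(4,5) by (rule setdist_le_dist)
  finally show ?thesis by (simp add: dist_norm)
qed

lemma disc_gap_pos: "disc_gap > 0"
proof -
  let ?Pairs = "{(i,k). i \<in> {1..2*p} \<and> k \<in> {1..2*p} \<and> i \<noteq> k}"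
  have "setdist (closure (disc cen rad i)) (closure (disc cen rad k)) > 0"
    if ik: "i \<in> {1..2*p}" "k \<in> {1..2*p}" "i \<noteq> k" for i k
  proof -
    have "complex_of_real (cen i) \<in> closure (disc cen rad i)"
      "complex_of_real (cen k) \<in> closure (disc cen rad k)"
      using closure_disc rad_pos ik by (auto simp: less_imp_le)
    hence "closure (disc cen rad i) \<noteq> {}" "closure (disc cen rad k) \<noteq> {}" by auto
    moreover have "compact (closure (disc cen rad i))" unfolding disc_def by simp
    ultimately show ?thesis
      using setdist_gt_0_compact_closed discs_disjoint[OF ik] by blast
  qed
  moreover have "(1,2) \<in> ?Pairs"
    using S by (auto simp: schottky_setup_def)
  moreover note finite_index_pairs[of p]
  ultimately show ?thesis unfolding disc_gap_def
    by (subst Min_gr_iff) (simp, blast, fast)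
qed

section \<open>The separation estimate\<close>

text \<open>The tails after the common prefix land in two distinct discs, hence are disc_gap apart;
  the common prefix of length rr shrinks this distance by at most distortion^rr.\<close>
lemma word_separation:
  assumes j: "j \<in> {1..2*p}" and z: "z \<in> disc cen rad j"
    and al: "al \<in> words_j p n j" and be: "be \<in> words_j p n j" and ne: "al \<noteq> be"
  shows "disc_gap \<le> distortion ^ rr al be *
           cmod (the (word_act p g al (Some z)) - the (word_act p g be (Some z)))"
proof -
  define r where "r = rr al be"
  have a: "reduced p al" "length al = n" and b: "reduced p be" "length be = n"
    using al be by (auto simp: words_j_def words_reduced)
  have rp: "r < n" "take r al = take r be" "al ! r \<noteq> be ! r"
    using rr_first_difference[OF a(2) b(2) ne] by (auto simp: r_def)
  define w where "w = take r al"
  have z': "z \<in> closure (disc cen rad j)" using z closure_subset by blast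
  obtain u where u: "word_act p g (drop r al) (Some z) = Some u"
    "u \<in> closure (disc cen rad (opp p (al ! r)))"
    using word_maps_into_disc words_j_tail[OF al j rp(1)] z' by metis
  obtain v where v: "word_act p g (drop r be) (Some z) = Some v"
    "v \<in> closure (disc cen rad (opp p (be ! r)))"
    using word_maps_into_disc words_j_tail[OF be j rp(1)] z' by metis
  have adm: "admissible p w (opp p (al ! r))" "admissible p w (opp p (be ! r))"
    using prefix_admissible a b rp unfolding w_def by (metis)+
  have act_al: "word_act p g al (Some z) = word_act p g w (Some u)"
    using u(1) word_act_append[of p g w "drop r al"] by (simp add: w_def)
  have act_be: "word_act p g be (Some z) = word_act p g w (Some v)"
    using v(1) word_act_append[of p g w "drop r be"] rp(2) by (simp add: w_def)
  have "opp p (al ! r) \<noteq> opp p (be ! r)"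
    using rp a b opp_opp unfolding reduced_def by metis
  hence "disc_gap \<le> cmod (u - v)"
    using disc_gap_le adm u(2) v(2) by (auto simp: admissible_def)
  also have "\<dots> \<le> distortion ^ r *
      cmod (the (word_act p g w (Some u)) - the (word_act p g w (Some v)))"
    using word_distortion[OF adm u(2) v(2)] rp a b by (simp add: w_def)
  finally show ?thesis unfolding act_al act_be r_def .
qed

end

theorem lemma4p4:
  fixes p :: nat and g :: "nat \<Rightarrow> imat" and cen rad :: "nat \<Rightarrow> real"
  assumes "schottky_setup p g cen rad"
  shows "\<exists>C::real. \<exists>\<theta>::real. C > 0 \<and> 0 < \<theta> \<and> \<theta> < 1 \<and>
    (\<forall>n\<ge>1. \<forall>j\<in>{1..2*p}. \<forall>z\<in>disc cen rad j.
       \<forall>al\<in>words_j p n j. \<forall>be\<in>words_j p n j. al \<noteq> be \<longrightarrow>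
         cmod (the (word_act p g al (Some z)) - the (word_act p g be (Some z)))
           \<ge> C * \<theta> ^ rr al be)"
proof (intro exI conjI allI impI ballI)
  let ?B = "distortion p g cen rad"
  have B: "?B > 1" by (rule distortion_gt_1[OF assms])
  show "disc_gap p cen rad > 0" by (rule disc_gap_pos[OF assms])
  show "0 < 1 / ?B" "1 / ?B < 1" using B by auto
  fix n j z al be
  assume "j \<in> {1..2*p}" "z \<in> disc cen rad j" "al \<in> words_j p n j" "be \<in> words_j p n j" "al \<noteq> be"
  hence "disc_gap p cen rad \<le> ?B ^ rr al be *
           cmod (the (word_act p g al (Some z)) - the (word_act p g be (Some z)))"
    by (rule word_separation[OF assms])
  thus "disc_gap p cen rad * (1 / ?B) ^ rr al be
          \<le> cmod (the (word_act p g al (Some z)) - the (word_act p g be (Some z)))"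
    using B by (simp add: power_one_over divide_le_eq mult.commute)
qed

end
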